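(* For the fully online fractional matching problem on arbitrary (not necessarily bipartite) graphs, the Water-Filling algorithm is $(2-\sqrt{2})$-competitive: on every instance, the final fractional matching $x$ produced by Water-Filling satisfies $\sum_{e\in E} x_e \ge (2-\sqrt{2})\cdot \mathrm{OPT}$, where $\mathrm{OPT}$ is the maximum size of a matching in $G$.
   Context: Fully online matching model: an undirected graph $G=(V,E)$ is revealed online. Each step is either the arrival or the deadline of a vertex. When a vertex $v$ arrives, all edges between $v$ and previously arrived vertices are revealed. It is assumed that every neighbor of a vertex $v$ arrives before $v$'s deadline. In the fractional version, the algorithm maintains $x_{uv}\in[0,1]$ for each edge with $x_w:=\sum_{z:(w,z)\in E}x_{wz}\le 1$ for every vertex $w$ (the "water-level" of $w$); for an edge $(u,v)$ where $u$ has the earlier deadline, $x_{uv}$ may only be increased at $u$'s deadline, and all decisions are irrevocable. Water-Filling: at the deadline of a vertex $u$, let $N(u)$ be the set of neighbors of $u$ whose deadlines have not yet been reached; while $x_u<1$ and $\min_{v\in N(u)}x_v<1$, continuously increase $x_{uv}$ at equal rates for all $v\in\arg\min_{v\in N(u)}x_v$. *)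

theory Defs
  imports Complex_Main
begin

text \<open>Graph: finite vertex set V, symmetric irreflexive adjacency E. Edges are
  represented as two-element sets; a fractional matching is a map from edges to reals.\<close>

definition edges :: "'v set \<Rightarrow> ('v \<Rightarrow> 'v \<Rightarrow> bool) \<Rightarrow> 'v set set" where
  "edges V E = {{u, v} | u v. u \<in> V \<and> v \<in> V \<and> E u v}"

definition level :: "'v set set \<Rightarrow> ('v set \<Rightarrow> real) \<Rightarrow> 'v \<Rightarrow> real" where
  "level Es x w = (\<Sum>e\<in>{e\<in>Es. w \<in> e}. x e)"

definition later_nbrs :: "'v set \<Rightarrow> ('v \<Rightarrow> 'v \<Rightarrow> bool) \<Rightarrow> ('v \<Rightarrow> nat) \<Rightarrow> 'v \<Rightarrow> 'v set" where
  "later_nbrs V E dl u = {v \<in> V. E u v \<and> dl u < dl v}"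

text \<open>Final common water level reached by the continuous Water-Filling process at u's
  deadline: the largest l \<le> 1 such that raising every later neighbour below l up to l
  does not push u's level above 1.\<close>
definition fill_level :: "'v set \<Rightarrow> ('v \<Rightarrow> 'v \<Rightarrow> bool) \<Rightarrow> ('v \<Rightarrow> nat) \<Rightarrow> ('v set \<Rightarrow> real) \<Rightarrow> 'v \<Rightarrow> real" where
  "fill_level V E dl x u =
     Sup {l. 0 \<le> l \<and> l \<le> 1 \<and>
          (\<Sum>v\<in>later_nbrs V E dl u. max 0 (l - level (edges V E) x v)) \<le> 1 - level (edges V E) x u}"

definition wf_step :: "'v set \<Rightarrow> ('v \<Rightarrow> 'v \<Rightarrow> bool) \<Rightarrow> ('v \<Rightarrow> nat) \<Rightarrow> ('v set \<Rightarrow> real) \<Rightarrow> 'v \<Rightarrow> ('v set \<Rightarrow> real)" where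
  "wf_step V E dl x u = (\<lambda>e. x e +
     (if e \<in> edges V E \<and> u \<in> e
      then (\<Sum>v\<in>e \<inter> later_nbrs V E dl u. max 0 (fill_level V E dl x u - level (edges V E) x v))
      else 0))"

text \<open>State just before time t: all deadlines at times < t have been processed in order.\<close>
fun wf_state :: "'v set \<Rightarrow> ('v \<Rightarrow> 'v \<Rightarrow> bool) \<Rightarrow> ('v \<Rightarrow> nat) \<Rightarrow> nat \<Rightarrow> ('v set \<Rightarrow> real)" where
  "wf_state V E dl 0 = (\<lambda>_. 0)"
| "wf_state V E dl (Suc t) =
     (if \<exists>u\<in>V. dl u = t
      then wf_step V E dl (wf_state V E dl t) (THE u. u \<in> V \<and> dl u = t)
      else wf_state V E dl t)"

definition water_filling :: "'v set \<Rightarrow> ('v \<Rightarrow> 'v \<Rightarrow> bool) \<Rightarrow> ('v \<Rightarrow> nat) \<Rightarrow> ('v set \<Rightarrow> real)" where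
  "water_filling V E dl = wf_state V E dl (Suc (Max (dl ` V)))"

definition is_matching :: "'v set \<Rightarrow> ('v \<Rightarrow> 'v \<Rightarrow> bool) \<Rightarrow> 'v set set \<Rightarrow> bool" where
  "is_matching V E M \<longleftrightarrow> M \<subseteq> edges V E \<and> (\<forall>e\<in>M. \<forall>f\<in>M. e \<noteq> f \<longrightarrow> e \<inter> f = {})"

definition OPT :: "'v set \<Rightarrow> ('v \<Rightarrow> 'v \<Rightarrow> bool) \<Rightarrow> nat" where
  "OPT V E = Max (card ` {M. is_matching V E M})"

end

theory Submission
  imports Defs
begin

text \<open>Primal-dual analysis with the gain-sharing function
  \<open>gain y = (1 - sqrt 2 / 2) * y + sqrt 2 / 4 * y\<^sup>2\<close>.
  When the level of a later neighbour v of u rises from \<open>x\<^sub>v\<close> to \<open>x\<^sub>v + d\<close> at u's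
  deadline, v keeps \<open>gain (x\<^sub>v + d) - gain x\<^sub>v\<close> of the increase; the dual value of u is
  the gain of its own level at its deadline plus the rest of the increase at that deadline.
  So the size of the fractional matching always equals the sum of the duals of the vertices
  whose deadline has passed plus the gains of the levels of the others, and finally the sum
  of all duals.

  For an edge (u, v) where u's deadline comes first, Water-Filling stopped at u with a common
  level l, and v's level never drops below l, so \<open>dual v \<ge> gain l\<close>. Either \<open>l = 1\<close> and
  \<open>gain 1 \<ge> 2 - sqrt 2\<close>, or u got saturated, and the convexity of gain yields
  \<open>dual u \<ge> gain x\<^sub>u + sqrt 2 / 2 * (1 - l) * (1 - x\<^sub>u)\<close>; in both cases
  \<open>dual u + dual v \<ge> 2 - sqrt 2\<close>. Summing over a maximum matching gives the bound.\<close>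

lemma Sup_sublevel_set:
  fixes \<phi> :: "real \<Rightarrow> real" and c K :: real
  assumes mono: "\<And>l l'. l \<le> l' \<Longrightarrow> \<phi> l \<le> \<phi> l'"
    and lipschitz: "\<And>l e. 0 \<le> e \<Longrightarrow> \<phi> (l + e) \<le> \<phi> l + K * e"
    and "0 \<le> K" and "\<phi> 0 \<le> c"
  defines "s \<equiv> Sup {l. 0 \<le> l \<and> l \<le> 1 \<and> \<phi> l \<le> c}"
  shows "0 \<le> s" and "s \<le> 1" and "\<phi> s \<le> c" and "s < 1 \<Longrightarrow> \<phi> s = c"
proof -
  define A where "A = {l. 0 \<le> l \<and> l \<le> 1 \<and> \<phi> l \<le> c}"
  have s_eq: "s = Sup A" by (simp add: s_def A_def)
  have "0 \<in> A" using \<open>\<phi> 0 \<le> c\<close> by (simp add: A_def)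
  have bdd: "bdd_above A" unfolding A_def bdd_above_def by auto
  have upper: "l \<le> s" if "l \<in> A" for l
    unfolding s_eq using that bdd by (rule cSup_upper)
  show "0 \<le> s" using upper \<open>0 \<in> A\<close> .
  show "s \<le> 1" unfolding s_eq by (intro cSup_least) (use \<open>0 \<in> A\<close> in blast, simp add: A_def)
  show "\<phi> s \<le> c"
  proof (rule ccontr)
    assume "\<not> \<phi> s \<le> c"
    define e where "e = (\<phi> s - c) / (K + 1)"
    have "e > 0" using \<open>\<not> \<phi> s \<le> c\<close> \<open>0 \<le> K\<close> by (simp add: e_def)
    then obtain l where "l \<in> A" "s - e < l"
      using less_cSup_iff[of A "s - e"] \<open>0 \<in> A\<close> bdd unfolding s_eq by auto
    have "\<phi> s \<le> \<phi> l + K * (s - l)"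
      using lipschitz[of "s - l" l] upper[OF \<open>l \<in> A\<close>] by simp
    also have "\<dots> \<le> c + K * e"
      using \<open>l \<in> A\<close> \<open>s - e < l\<close> \<open>0 \<le> K\<close> by (intro add_mono mult_left_mono) (auto simp: A_def)
    finally show False
      using \<open>e > 0\<close> \<open>0 \<le> K\<close> by (simp add: e_def field_simps)
  qed
  show "\<phi> s = c" if "s < 1"
  proof (rule ccontr)
    assume "\<phi> s \<noteq> c"
    with \<open>\<phi> s \<le> c\<close> have "\<phi> s < c" by simp
    define e where "e = min (1 - s) ((c - \<phi> s) / (K + 1))"
    have "e > 0" using \<open>\<phi> s < c\<close> \<open>s < 1\<close> \<open>0 \<le> K\<close> by (simp add: e_def)
    have "K * e \<le> K * ((c - \<phi> s) / (K + 1))"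
      using \<open>0 \<le> K\<close> by (intro mult_left_mono) (auto simp: e_def)
    also have "\<dots> \<le> c - \<phi> s" using \<open>0 \<le> K\<close> \<open>\<phi> s < c\<close> by (simp add: field_simps)
    finally have "\<phi> (s + e) \<le> c" using lipschitz[of e s] \<open>e > 0\<close> by simp
    then have "s + e \<in> A" using \<open>0 \<le> s\<close> \<open>e > 0\<close> by (simp add: A_def e_def)
    then show False using upper \<open>e > 0\<close> by fastforce
  qed
qed

definition gain :: "real \<Rightarrow> real" where
  "gain y = (1 - sqrt 2 / 2) * y + sqrt 2 / 4 * y\<^sup>2"

lemma gain_0 [simp]: "gain 0 = 0"
  by (simp add: gain_def)

lemma gain_nonneg: "0 \<le> y \<Longrightarrow> 0 \<le> gain y"
  unfolding gain_def using sqrt2_less_2 by (intro add_nonneg_nonneg) auto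

lemma gain_mono: "0 \<le> a \<Longrightarrow> a \<le> b \<Longrightarrow> gain a \<le> gain b"
  unfolding gain_def using sqrt2_less_2
  by (intro add_mono mult_left_mono power_mono) auto

lemma gain_1_ge: "2 - sqrt 2 \<le> gain 1"
proof -
  have "4/3 \<le> sqrt (2::real)"
    by (rule real_le_rsqrt) (simp add: power2_eq_square)
  then show ?thesis unfolding gain_def by simp
qed

text \<open>The derivative of \<open>gain\<close> on \<open>[y, l]\<close> is at most \<open>1 - sqrt 2 / 2 * (1 - l)\<close>.\<close>
lemma gain_increase_bound:
  fixes y l :: real
  defines "d \<equiv> max 0 (l - y)"
  shows "sqrt 2 / 2 * (1 - l) * d \<le> d - (gain (y + d) - gain y)"
proof (cases "l \<le> y")
  case False
  then have "d - (gain (y + d) - gain y) - sqrt 2 / 2 * (1 - l) * d = sqrt 2 / 4 * (l - y)\<^sup>2"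
    by (simp add: d_def gain_def field_simps power2_eq_square)
  moreover have "0 \<le> sqrt 2 / 4 * (l - y)\<^sup>2" by simp
  ultimately show ?thesis by linarith
qed (simp add: d_def)

lemma gain_pair_bound: "2 - sqrt 2 \<le> gain p + gain l + sqrt 2 / 2 * (1 - l) * (1 - p)"
proof -
  define r where "r = sqrt (2::real)"
  have "r * r = 2" by (simp add: r_def)
  then have "gain p + gain l + r / 2 * (1 - l) * (1 - p) - (2 - r) = r / 4 * (p + l - 2 + r)\<^sup>2"
    unfolding gain_def r_def[symmetric]
    by (simp add: field_simps power2_eq_square) (simp add: mult.assoc[symmetric])
  moreover have "0 \<le> r / 4 * (p + l - 2 + r)\<^sup>2" by (simp add: r_def)
  ultimately show ?thesis unfolding r_def by linarith
qed

locale deadline_graph =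
  fixes V :: "'v set" and E :: "'v \<Rightarrow> 'v \<Rightarrow> bool" and dl :: "'v \<Rightarrow> nat"
  assumes finite_V: "finite V"
    and adj_in_V: "E u v \<Longrightarrow> u \<in> V \<and> v \<in> V"
    and adj_sym: "E u v \<Longrightarrow> E v u"
    and adj_irrefl: "\<not> E u u"
    and inj_dl: "inj_on dl V"
begin

abbreviation "Es \<equiv> edges V E"
abbreviation "N u \<equiv> later_nbrs V E dl u"

lemma finite_edges: "finite Es"
proof -
  have "Es = (\<lambda>(u, v). {u, v}) ` {(u, v). u \<in> V \<and> v \<in> V \<and> E u v}"
    unfolding edges_def by auto
  moreover have "finite {(u, v). u \<in> V \<and> v \<in> V \<and> E u v}"
    by (rule finite_subset[of _ "V \<times> V"]) (auto simp: finite_V)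
  ultimately show ?thesis by simp
qed

lemma edge_subset_V: "e \<in> Es \<Longrightarrow> e \<subseteq> V"
  unfolding edges_def using adj_in_V by auto

lemma finite_later_nbrs: "finite (N u)"
  unfolding later_nbrs_def using finite_V by simp

lemma later_nbr_neq [simp]: "v \<in> N u \<Longrightarrow> v \<noteq> u"
  unfolding later_nbrs_def by auto

lemma later_nbr_not_self [simp]: "u \<notin> N u"
  unfolding later_nbrs_def by simp

lemma edges_containing_both:
  assumes "u \<noteq> w"
  shows "{e \<in> Es. u \<in> e \<and> w \<in> e} = (if E u w then {{u, w}} else {})"
proof -
  have "e = {u, w} \<and> E u w" if "e \<in> Es" "u \<in> e" "w \<in> e" for e
  proof -
    obtain a b where "e = {a, b}" "E a b" using \<open>e \<in> Es\<close> unfolding edges_def by blast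
    then show ?thesis using that assms adj_sym by auto
  qed
  moreover have "E u w \<Longrightarrow> {u, w} \<in> Es" unfolding edges_def using adj_in_V by blast
  ultimately show ?thesis by auto
qed

lemma sum_edges_at_later_nbrs:
  "(\<Sum>e | e \<in> Es \<and> u \<in> e. \<Sum>v\<in>e \<inter> N u. f v) = (\<Sum>v\<in>N u. f v :: real)"
proof -
  have "(\<Sum>e | e \<in> Es \<and> u \<in> e. \<Sum>v\<in>e \<inter> N u. f v)
      = (\<Sum>e | e \<in> Es \<and> u \<in> e. \<Sum>v | v \<in> N u \<and> v \<in> e. f v)"
    by (intro sum.cong) auto
  also have "\<dots> = (\<Sum>v\<in>N u. \<Sum>e | e \<in> {e \<in> Es. u \<in> e} \<and> v \<in> e. f v)"
    by (rule sum.swap_restrict) (auto simp: finite_edges finite_later_nbrs)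
  also have "\<dots> = (\<Sum>v\<in>N u. f v)"
  proof (intro sum.cong refl)
    fix v assume "v \<in> N u"
    then have "E u v" "u \<noteq> v" by (auto simp: later_nbrs_def)
    then have "{e. e \<in> {e \<in> Es. u \<in> e} \<and> v \<in> e} = {{u, v}}"
      using edges_containing_both[of u v] by auto
    then show "(\<Sum>e | e \<in> {e \<in> Es. u \<in> e} \<and> v \<in> e. f v) = f v" by simp
  qed
  finally show ?thesis .
qed

definition increment :: "('v set \<Rightarrow> real) \<Rightarrow> 'v \<Rightarrow> 'v \<Rightarrow> real" where
  "increment x u v = max 0 (fill_level V E dl x u - level Es x v)"

lemma increment_nonneg: "0 \<le> increment x u v"
  by (simp add: increment_def)

lemma level_wf_step:
  "level Es (wf_step V E dl x u) w
     = level Es x w + (\<Sum>e | e \<in> Es \<and> u \<in> e \<and> w \<in> e. \<Sum>v\<in>e \<inter> N u. increment x u v)"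
proof -
  have "level Es (wf_step V E dl x u) w = level Es x w +
     (\<Sum>e | e \<in> Es \<and> w \<in> e. if u \<in> e then (\<Sum>v\<in>e \<inter> N u. increment x u v) else 0)"
    unfolding level_def wf_step_def increment_def by (simp add: sum.distrib)
  also have "(\<Sum>e | e \<in> Es \<and> w \<in> e. if u \<in> e then (\<Sum>v\<in>e \<inter> N u. increment x u v) else 0)
      = (\<Sum>e | e \<in> Es \<and> u \<in> e \<and> w \<in> e. \<Sum>v\<in>e \<inter> N u. increment x u v)"
    using finite_edges by (simp add: sum.If_cases Int_def) (rule sum.cong, auto)
  finally show ?thesis .
qed

lemma level_wf_step_self:
  "level Es (wf_step V E dl x u) u = level Es x u + (\<Sum>v\<in>N u. increment x u v)"
  using sum_edges_at_later_nbrs[where f = "increment x u"] by (simp add: level_wf_step)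

lemma level_wf_step_other:
  assumes "w \<noteq> u"
  shows "level Es (wf_step V E dl x u) w = level Es x w + (if w \<in> N u then increment x u w else 0)"
proof (cases "E u w")
  case True
  have "{u, w} \<inter> N u = (if w \<in> N u then {w} else {})" by auto
  then show ?thesis using edges_containing_both[of u w] assms True by (simp add: level_wf_step)
next
  case False
  then have no_edge: "{e \<in> Es. u \<in> e \<and> w \<in> e} = {}"
    using edges_containing_both[of u w] assms by simp
  have "w \<notin> N u" using False by (simp add: later_nbrs_def)
  then show ?thesis unfolding level_wf_step no_edge by simp
qed

lemma sum_wf_step:
  "(\<Sum>e\<in>Es. wf_step V E dl x u e) = (\<Sum>e\<in>Es. x e) + (\<Sum>v\<in>N u. increment x u v)"
proof -
  have "(\<Sum>e\<in>Es. wf_step V E dl x u e) = (\<Sum>e\<in>Es. x e) +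
     (\<Sum>e\<in>Es. if u \<in> e then (\<Sum>v\<in>e \<inter> N u. increment x u v) else 0)"
    unfolding wf_step_def increment_def by (simp add: sum.distrib)
  also have "(\<Sum>e\<in>Es. if u \<in> e then (\<Sum>v\<in>e \<inter> N u. increment x u v) else 0)
     = (\<Sum>e | e \<in> Es \<and> u \<in> e. \<Sum>v\<in>e \<inter> N u. increment x u v)"
    using finite_edges by (simp add: sum.If_cases Int_def)
  finally show ?thesis using sum_edges_at_later_nbrs[where f = "increment x u"] by simp
qed

lemma
  assumes "\<And>v. 0 \<le> level Es x v" and "level Es x u \<le> 1"
  shows fill_level_nonneg: "0 \<le> fill_level V E dl x u"
    and fill_level_le_1: "fill_level V E dl x u \<le> 1"
    and sum_increment_le: "(\<Sum>v\<in>N u. increment x u v) \<le> 1 - level Es x u"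
    and sum_increment_eq:
      "fill_level V E dl x u < 1 \<Longrightarrow> (\<Sum>v\<in>N u. increment x u v) = 1 - level Es x u"
proof -
  define \<phi> where "\<phi> l = (\<Sum>v\<in>N u. max 0 (l - level Es x v))" for l
  have mono: "\<phi> l \<le> \<phi> l'" if "l \<le> l'" for l l'
    unfolding \<phi>_def using that by (intro sum_mono) auto
  have lipschitz: "\<phi> (l + e) \<le> \<phi> l + real (card (N u)) * e" if "0 \<le> e" for l e
  proof -
    have "\<phi> (l + e) \<le> (\<Sum>v\<in>N u. max 0 (l - level Es x v) + e)"
      unfolding \<phi>_def using that by (intro sum_mono) auto
    also have "\<dots> = \<phi> l + real (card (N u)) * e" by (simp add: \<phi>_def sum.distrib)
    finally show ?thesis .
  qed
  have "\<phi> 0 = 0" unfolding \<phi>_def using assms(1) by (intro sum.neutral) simp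
  then have "\<phi> 0 \<le> 1 - level Es x u" using assms(2) by simp
  note Sup = Sup_sublevel_set[OF mono lipschitz _ this, unfolded \<phi>_def, folded fill_level_def]
  have sum_eq: "(\<Sum>v\<in>N u. increment x u v) = \<phi> (fill_level V E dl x u)"
    unfolding increment_def \<phi>_def ..
  show "0 \<le> fill_level V E dl x u" "fill_level V E dl x u \<le> 1" using Sup by simp_all
  show "(\<Sum>v\<in>N u. increment x u v) \<le> 1 - level Es x u"
    using Sup(3) unfolding sum_eq \<phi>_def by simp
  show "(\<Sum>v\<in>N u. increment x u v) = 1 - level Es x u" if "fill_level V E dl x u < 1"
    using Sup(4) that unfolding sum_eq \<phi>_def by simp
qed

abbreviation "S t \<equiv> wf_state V E dl t"
abbreviation "lev t w \<equiv> level Es (S t) w"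

lemma wf_state_at_deadline:
  assumes "u \<in> V"
  shows "S (Suc (dl u)) = wf_step V E dl (S (dl u)) u"
proof -
  have "(THE u'. u' \<in> V \<and> dl u' = dl u) = u"
    using assms inj_dl by (intro the_equality) (auto dest: inj_onD)
  then show ?thesis using assms by auto
qed

declare wf_state.simps(2) [simp del]

lemma wf_state_Suc_cases:
  obtains "\<forall>u\<in>V. dl u \<noteq> t" "S (Suc t) = S t"
  | u where "u \<in> V" "dl u = t" "S (Suc t) = wf_step V E dl (S t) u"
proof (cases "\<exists>u\<in>V. dl u = t")
  case True
  then show thesis using that(2) wf_state_at_deadline by blast
qed (use that(1) in \<open>simp add: wf_state.simps(2)\<close>)

lemma wf_state_le_Suc: "S t e \<le> S (Suc t) e"
proof (cases rule: wf_state_Suc_cases[of t])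
  case (2 u)
  have "0 \<le> (\<Sum>v\<in>e \<inter> N u. increment (S t) u v)" by (intro sum_nonneg increment_nonneg)
  then show ?thesis unfolding \<open>S (Suc t) = _\<close> wf_step_def increment_def by simp
qed simp

lemma wf_state_nonneg: "0 \<le> S t e"
  by (induction t) (auto intro: order_trans[OF _ wf_state_le_Suc])

lemma lev_nonneg: "0 \<le> lev t w"
  unfolding level_def by (intro sum_nonneg wf_state_nonneg)

lemma lev_mono: "t \<le> t' \<Longrightarrow> lev t w \<le> lev t' w"
proof (induction t' rule: dec_induct)
  case (step t')
  have "lev t' w \<le> lev (Suc t') w"
    unfolding level_def by (intro sum_mono wf_state_le_Suc)
  with step.IH show ?case by simp
qed simp

lemma level_wf_step_le_1:
  assumes "\<And>v. 0 \<le> level Es x v" and "\<And>v. level Es x v \<le> 1"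
  shows "level Es (wf_step V E dl x u) w \<le> 1"
proof (cases "w = u")
  case True
  then show ?thesis using sum_increment_le[OF assms(1) assms(2)[of u]] by (simp add: level_wf_step_self)
next
  case False
  have "level Es x w + increment x u w \<le> 1"
    using fill_level_le_1[OF assms(1) assms(2)[of u]] assms(2)[of w] by (simp add: increment_def)
  then show ?thesis using False assms(2)[of w] by (simp add: level_wf_step_other)
qed

lemma lev_le_1: "lev t w \<le> 1"
proof (induction t arbitrary: w)
  case (Suc t)
  show ?case
    by (cases rule: wf_state_Suc_cases[of t]) (auto simp: Suc level_wf_step_le_1 lev_nonneg)
qed (simp add: level_def)

abbreviation "fill u \<equiv> fill_level V E dl (S (dl u)) u"
abbreviation "inc u v \<equiv> increment (S (dl u)) u v"

lemma lev_after_deadline_self: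
  "u \<in> V \<Longrightarrow> lev (Suc (dl u)) u = lev (dl u) u + (\<Sum>v\<in>N u. inc u v)"
  by (simp add: wf_state_at_deadline level_wf_step_self)

lemma lev_after_deadline_other:
  "u \<in> V \<Longrightarrow> w \<noteq> u \<Longrightarrow>
    lev (Suc (dl u)) w = lev (dl u) w + (if w \<in> N u then inc u w else 0)"
  by (simp add: wf_state_at_deadline level_wf_step_other)

definition dual :: "'v \<Rightarrow> real" where
  "dual u = gain (lev (dl u) u) + (lev (Suc (dl u)) u - lev (dl u) u)
     - (\<Sum>v\<in>N u. gain (lev (Suc (dl u)) v) - gain (lev (dl u) v))"

lemma sum_gain_after_deadline:
  assumes "u \<in> V"
  shows "(\<Sum>w | w \<in> V \<and> dl u < dl w. gain (lev (Suc (dl u)) w))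
    = (\<Sum>w | w \<in> V \<and> dl u < dl w. gain (lev (dl u) w))
      + (\<Sum>v\<in>N u. gain (lev (Suc (dl u)) v) - gain (lev (dl u) v))"
proof -
  have "(\<Sum>w | w \<in> V \<and> dl u < dl w. gain (lev (Suc (dl u)) w) - gain (lev (dl u) w))
      = (\<Sum>v\<in>N u. gain (lev (Suc (dl u)) v) - gain (lev (dl u) v))"
  proof (intro sum.mono_neutral_right ballI)
    fix w assume "w \<in> {w \<in> V. dl u < dl w} - N u"
    then have "w \<noteq> u" "w \<notin> N u" by auto
    then show "gain (lev (Suc (dl u)) w) - gain (lev (dl u) w) = 0"
      by (simp add: lev_after_deadline_other[OF assms])
  qed (auto simp: finite_V later_nbrs_def)
  then show ?thesis by (simp add: sum_subtractf)
qed

lemma sum_wf_state_eq: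
  "(\<Sum>e\<in>Es. S t e)
    = (\<Sum>u | u \<in> V \<and> dl u < t. dual u) + (\<Sum>w | w \<in> V \<and> t \<le> dl w. gain (lev t w))"
proof (induction t)
  case (Suc t)
  show ?case
  proof (cases rule: wf_state_Suc_cases[of t])
    case 1
    then have "{u \<in> V. dl u < Suc t} = {u \<in> V. dl u < t}"
      and "{w \<in> V. Suc t \<le> dl w} = {w \<in> V. t \<le> dl w}"
      by (auto simp: less_Suc_eq Suc_le_eq order_le_less)
    with 1 Suc.IH show ?thesis by simp
  next
    case (2 u)
    have past: "{u' \<in> V. dl u' < Suc t} = insert u {u' \<in> V. dl u' < t}"
      using 2 inj_dl by (auto simp: less_Suc_eq dest: inj_onD)
    have pending: "{w \<in> V. t \<le> dl w} = insert u {w \<in> V. dl u < dl w}"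
      using 2 inj_dl by (auto simp: order_le_less dest: inj_onD)
    have "(\<Sum>e\<in>Es. S (Suc t) e) = (\<Sum>e\<in>Es. S t e) + (lev (Suc t) u - lev t u)"
      using 2 by (simp add: sum_wf_step level_wf_step_self)
    then show ?thesis
      using Suc.IH sum_gain_after_deadline[OF \<open>u \<in> V\<close>] 2 finite_V
      unfolding past pending dual_def by (simp add: Suc_le_eq)
  qed
qed (simp add: level_def)

lemma dual_eq:
  assumes "u \<in> V"
  shows "dual u = gain (lev (dl u) u)
    + (\<Sum>v\<in>N u. inc u v - (gain (lev (dl u) v + inc u v) - gain (lev (dl u) v)))"
proof -
  have "(\<Sum>v\<in>N u. gain (lev (Suc (dl u)) v) - gain (lev (dl u) v))
      = (\<Sum>v\<in>N u. gain (lev (dl u) v + inc u v) - gain (lev (dl u) v))"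
    by (intro sum.cong) (auto simp: lev_after_deadline_other[OF assms])
  then show ?thesis
    unfolding dual_def lev_after_deadline_self[OF assms] by (simp add: sum_subtractf)
qed

lemma dual_ge:
  assumes "u \<in> V"
  shows "gain (lev (dl u) u) + sqrt 2 / 2 * (1 - fill u) * (\<Sum>v\<in>N u. inc u v) \<le> dual u"
proof -
  have "sqrt 2 / 2 * (1 - fill u) * (\<Sum>v\<in>N u. inc u v)
      = (\<Sum>v\<in>N u. sqrt 2 / 2 * (1 - fill u) * inc u v)"
    by (simp add: sum_distrib_left)
  also have "\<dots> \<le> (\<Sum>v\<in>N u. inc u v - (gain (lev (dl u) v + inc u v) - gain (lev (dl u) v)))"
    unfolding increment_def by (intro sum_mono gain_increase_bound)
  finally show ?thesis unfolding dual_eq[OF assms] by linarith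
qed

lemma dual_ge_gain:
  assumes "u \<in> V"
  shows "gain (lev (dl u) u) \<le> dual u"
proof -
  have "0 \<le> sqrt 2 / 2 * (1 - fill u) * (\<Sum>v\<in>N u. inc u v)"
    using fill_level_le_1[OF lev_nonneg lev_le_1]
    by (intro mult_nonneg_nonneg sum_nonneg increment_nonneg) auto
  then show ?thesis using dual_ge[OF assms] by linarith
qed

lemma dual_nonneg: "u \<in> V \<Longrightarrow> 0 \<le> dual u"
  using dual_ge_gain gain_nonneg[OF lev_nonneg] by (meson order_trans)

lemma fill_le_lev_at_later_deadline:
  assumes "E u v" and "dl u < dl v"
  shows "fill u \<le> lev (dl v) v"
proof -
  have "u \<in> V" "v \<in> V" using adj_in_V[OF \<open>E u v\<close>] by auto
  then have "v \<in> N u" "v \<noteq> u" using assms by (auto simp: later_nbrs_def)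
  then have "fill u \<le> lev (Suc (dl u)) v"
    by (simp add: lev_after_deadline_other[OF \<open>u \<in> V\<close>] increment_def)
  also have "\<dots> \<le> lev (dl v) v" using \<open>dl u < dl v\<close> by (intro lev_mono) simp
  finally show ?thesis .
qed

lemma dual_edge_bound_ordered:
  assumes "E u v" and "dl u < dl v"
  shows "2 - sqrt 2 \<le> dual u + dual v"
proof -
  have "u \<in> V" "v \<in> V" using adj_in_V[OF \<open>E u v\<close>] by auto
  have "0 \<le> fill u" "fill u \<le> 1"
    using fill_level_nonneg[OF lev_nonneg lev_le_1] fill_level_le_1[OF lev_nonneg lev_le_1] .
  have "gain (fill u) \<le> gain (lev (dl v) v)"
    using \<open>0 \<le> fill u\<close> fill_le_lev_at_later_deadline[OF assms] by (rule gain_mono)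
  also have "\<dots> \<le> dual v" using dual_ge_gain[OF \<open>v \<in> V\<close>] .
  finally have v_bound: "gain (fill u) \<le> dual v" .
  show ?thesis
  proof (cases "fill u < 1")
    case True
    then have "(\<Sum>w\<in>N u. inc u w) = 1 - lev (dl u) u"
      by (rule sum_increment_eq[OF lev_nonneg lev_le_1])
    then have "gain (lev (dl u) u) + sqrt 2 / 2 * (1 - fill u) * (1 - lev (dl u) u) \<le> dual u"
      using dual_ge[OF \<open>u \<in> V\<close>] by simp
    then show ?thesis using v_bound gain_pair_bound[of "lev (dl u) u" "fill u"] by linarith
  next
    case False
    then have "fill u = 1" using \<open>fill u \<le> 1\<close> by simp
    then show ?thesis using v_bound gain_1_ge dual_nonneg[OF \<open>u \<in> V\<close>] by simp
  qed
qed

lemma dual_edge_bound: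
  assumes "E u v"
  shows "2 - sqrt 2 \<le> dual u + dual v"
proof -
  have "u \<in> V" "v \<in> V" "u \<noteq> v" using adj_in_V[OF assms] adj_irrefl assms by auto
  then have "dl u \<noteq> dl v" using inj_dl by (auto simp: inj_on_eq_iff)
  then show ?thesis
    using dual_edge_bound_ordered[OF assms] dual_edge_bound_ordered[OF adj_sym[OF assms]]
    by (cases "dl u < dl v") auto
qed

lemma sum_water_filling_eq_sum_dual: "(\<Sum>e\<in>Es. water_filling V E dl e) = (\<Sum>u\<in>V. dual u)"
proof -
  define T where "T = Suc (Max (dl ` V))"
  have "dl u < T" if "u \<in> V" for u
    using that finite_V by (simp add: T_def le_imp_less_Suc)
  then have all_past: "{u \<in> V. dl u < T} = V" and none_pending: "{w \<in> V. T \<le> dl w} = {}"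
    by (auto simp: not_le[symmetric])
  show ?thesis
    using sum_wf_state_eq[of T] unfolding water_filling_def T_def[symmetric] all_past none_pending
    by simp
qed

lemma OPT_attained: obtains M where "is_matching V E M" "card M = OPT V E"
proof -
  have "finite {M. is_matching V E M}" unfolding is_matching_def
    by (rule finite_subset[of _ "Pow Es"]) (auto simp: finite_edges)
  moreover have "{} \<in> {M. is_matching V E M}" by (simp add: is_matching_def)
  ultimately have "OPT V E \<in> card ` {M. is_matching V E M}"
    unfolding OPT_def by (intro Max_in) auto
  then show ?thesis using that by auto
qed

lemma sum_matching_le:
  assumes "is_matching V E M" and "\<And>w. w \<in> V \<Longrightarrow> 0 \<le> f w"
  shows "(\<Sum>e\<in>M. \<Sum>w\<in>e. f w) \<le> (\<Sum>w\<in>V. f w :: real)"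
proof -
  have "M \<subseteq> Es" and disjoint: "\<forall>e\<in>M. \<forall>e'\<in>M. e \<noteq> e' \<longrightarrow> e \<inter> e' = {}"
    using assms(1) by (auto simp: is_matching_def)
  have "\<forall>e\<in>M. finite e"
    using \<open>M \<subseteq> Es\<close> edge_subset_V finite_V by (meson finite_subset subsetD)
  then have "(\<Sum>e\<in>M. \<Sum>w\<in>e. f w) = (\<Sum>w\<in>\<Union>M. f w)"
    using sum.Union_disjoint[OF _ disjoint, of f] by (simp add: o_def)
  also have "\<dots> \<le> (\<Sum>w\<in>V. f w)"
    using \<open>M \<subseteq> Es\<close> edge_subset_V assms(2) by (intro sum_mono2 finite_V) auto
  finally show ?thesis .
qed

lemma water_filling_competitive:
  "(2 - sqrt 2) * real (OPT V E) \<le> (\<Sum>e\<in>Es. water_filling V E dl e)"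
proof -
  obtain M where M: "is_matching V E M" "card M = OPT V E" by (rule OPT_attained)
  have "(2 - sqrt 2) * real (OPT V E) = (\<Sum>e\<in>M. 2 - sqrt 2)" using M(2) by simp
  also have "\<dots> \<le> (\<Sum>e\<in>M. \<Sum>w\<in>e. dual w)"
  proof (rule sum_mono)
    fix e assume "e \<in> M"
    then obtain a b where "e = {a, b}" "E a b"
      using M(1) unfolding is_matching_def edges_def by blast
    moreover have "a \<noteq> b" using \<open>E a b\<close> adj_irrefl by blast
    ultimately show "2 - sqrt 2 \<le> (\<Sum>w\<in>e. dual w)" using dual_edge_bound by simp
  qed
  also have "\<dots> \<le> (\<Sum>w\<in>V. dual w)" using M(1) dual_nonneg by (rule sum_matching_le)
  finally show ?thesis by (simp add: sum_water_filling_eq_sum_dual)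
qed

end

theorem theorem3p1:
  fixes V :: "'v set" and E :: "'v \<Rightarrow> 'v \<Rightarrow> bool" and arr dl :: "'v \<Rightarrow> nat"
  assumes "finite V"
    and "\<forall>u v. E u v \<longrightarrow> u \<in> V \<and> v \<in> V"
    and "\<forall>u v. E u v \<longrightarrow> E v u"
    and "\<forall>u. \<not> E u u"
    and "inj_on arr V" and "inj_on dl V"
    and "\<forall>u\<in>V. \<forall>v\<in>V. arr u \<noteq> dl v"
    and "\<forall>v\<in>V. arr v < dl v"
    and "\<forall>u v. E u v \<longrightarrow> arr u < dl v"
  shows "(\<Sum>e\<in>edges V E. water_filling V E dl e) \<ge> (2 - sqrt 2) * real (OPT V E)"
proof -
  interpret deadline_graph V E dl using assms by unfold_locales auto
  show ?thesis using water_filling_competitive by simp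
qed

end
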